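(* Under the CRFE, assume additivity, i.e., the individual factorial-effect vectors $\boldsymbol{\tau}_i$ are the same for all units ($\boldsymbol{S}_{\tau\tau}=\boldsymbol{0}$). Then for each $1\le f\le F$, $\max_{1\le k\le F}\gamma^2_{fk}=\gamma^2_{ff}=R^2_f=S^{\parallel}_{11}/S_{11}$. Moreover, the squared multiple partial correlation between $\hat\tau_f$ and $\hat{\boldsymbol{\tau}}_x$ given $\hat{\boldsymbol{\tau}}_{x,f}$ is zero, i.e., the residuals from the linear projections of $\hat\tau_f$ and of $\hat{\boldsymbol{\tau}}_x$ on $\hat{\boldsymbol{\tau}}_{x,f}$ are uncorrelated. If further $n_1=\dots=n_Q=n/Q$, then $\gamma^2_{fk}=0$ for all $k\ne f$.
   Context: Setup ($2^K$ factorial experiment, finite population). $K\ge1$ two-level factors, $Q=2^K$ treatment combinations $q=1,\dots,Q$; combination $q$ sets factor $k$ at $\iota_k(q)\in\{-1,+1\}$, bijectively onto $\{-1,+1\}^K$. $F=Q-1$ factorial effects, one per nonempty $A\subseteq\{1,\dots,K\}$, enumerated $f=1,\dots,F$, with $g_{fq}=\prod_{k\in A}\iota_k(q)$; $\boldsymbol{b}_q=(g_{1q},\dots,g_{Fq})'$. Units $i=1,\dots,n$ have fixed potential outcomes $Y_i(q)$ and covariates $\boldsymbol{x}_i\in\mathbb{R}^L$; $\bar Y(q),\bar{\boldsymbol{x}}$ means; $\boldsymbol{\tau}_i=2^{-(K-1)}\sum_q\boldsymbol{b}_qY_i(q)$. Finite-population (co)variances with divisor $n-1$: $S_{11}$ variance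 of $Y(1)$; $\boldsymbol{S}_{\tau\tau}$ covariance of $\boldsymbol{\tau}_i$; $\boldsymbol{S}_{xx}$ of $\boldsymbol{x}$ (nonsingular); $\boldsymbol{S}_{q,x}$ between $Y(q)$ and $\boldsymbol{x}$. $S^{\parallel}_{11}=\boldsymbol{S}_{1,x}\boldsymbol{S}_{xx}^{-1}\boldsymbol{S}_{1,x}'$ (variance of the finite-population linear projection of $Y(1)$ on $\boldsymbol{x}$). CRFE: fixed $n_q\ge1$, $\sum n_q=n$; $\boldsymbol{Z}$ uniform over assignments with $n_q$ units in combination $q$; $\hat{\bar Y}(q),\hat{\bar{\boldsymbol{x}}}(q)$ group-$q$ means of observed outcomes $Y_i(Z_i)$ and covariates; $\hat{\boldsymbol{\tau}}=(\hat\tau_1,\dots,\hat\tau_F)'=2^{-(K-1)}\sum_q\boldsymbol{b}_q\hat{\bar Y}(q)$; $\hat{\boldsymbol{\tau}}_{x,f}=2^{-(K-1)}\sum_qg_{fq}\hat{\bar{\boldsymbol{x}}}(q)$, $\hat{\boldsymbol{\tau}}_x=(\hat{\boldsymbol{\tau}}_{x,1}',\dots,\hat{\boldsymbol{\tau}}_{x,F}')'$. All (co)variances/correlations are with respect to the CRFE randomization. $\gamma^2_{fk}=\mathrm{Cov}(\hat\tau_f,\hat{\boldsymbol{\tau}}_{x,k})\mathrm{Cov}(\hat{\boldsymbol{\tau}}_{x,k})^{-1}\mathrm{Cov}(\hat{\boldsymbol{\tau}}_{x,k},\hat\tau_f)/\mathrm{Var}(\hat\tau_f)$ is the squared multiple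 correlation between $\hat\tau_f$ and $\hat{\boldsymbol{\tau}}_{x,k}$, and $R^2_f$ the squared multiple correlation between $\hat\tau_f$ and $\hat{\boldsymbol{\tau}}_x$ (these are defined when $\mathrm{Var}(\hat\tau_f)>0$, i.e., $S_{11}>0$ under additivity). *)

theory Defs
  imports "HOL-Library.FuncSet" "Jordan_Normal_Form.Gauss_Jordan_Elimination"
begin

definition fmean :: "nat \<Rightarrow> (nat \<Rightarrow> real) \<Rightarrow> real" where
  "fmean n u = (\<Sum>i<n. u i) / real n"

definition fcov :: "nat \<Rightarrow> (nat \<Rightarrow> real) \<Rightarrow> (nat \<Rightarrow> real) \<Rightarrow> real" where
  "fcov n u v = (\<Sum>i<n. (u i - fmean n u) * (v i - fmean n v)) / (real n - 1)"

definition fcov_xx :: "nat \<Rightarrow> (nat \<Rightarrow> nat \<Rightarrow> real) \<Rightarrow> nat \<Rightarrow> real mat" where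
  "fcov_xx n x L = mat L L (\<lambda>(l, m). fcov n (\<lambda>i. x i l) (\<lambda>i. x i m))"

definition fcov_ux :: "nat \<Rightarrow> (nat \<Rightarrow> real) \<Rightarrow> (nat \<Rightarrow> nat \<Rightarrow> real) \<Rightarrow> nat \<Rightarrow> real vec" where
  "fcov_ux n u x L = vec L (\<lambda>l. fcov n u (\<lambda>i. x i l))"

definition fproj_var :: "nat \<Rightarrow> (nat \<Rightarrow> real) \<Rightarrow> (nat \<Rightarrow> nat \<Rightarrow> real) \<Rightarrow> nat \<Rightarrow> real" where
  "fproj_var n u x L =
     fcov_ux n u x L \<bullet> (the (mat_inverse (fcov_xx n x L)) *\<^sub>v fcov_ux n u x L)"

text \<open>Assignments: unit i (i < n) receives combination Z i (< Q), exactly nq q units in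
  combination q. The CRFE is the uniform distribution on this set.\<close>
definition crfe_assignments :: "nat \<Rightarrow> nat \<Rightarrow> (nat \<Rightarrow> nat) \<Rightarrow> (nat \<Rightarrow> nat) set" where
  "crfe_assignments n Q nq =
     {Z. Z \<in> {..<n} \<rightarrow>\<^sub>E {..<Q} \<and> (\<forall>q<Q. card {i\<in>{..<n}. Z i = q} = nq q)}"

definition rexp :: "(nat \<Rightarrow> nat) set \<Rightarrow> ((nat \<Rightarrow> nat) \<Rightarrow> real) \<Rightarrow> real" where
  "rexp A h = (\<Sum>Z\<in>A. h Z) / real (card A)"

definition rcov :: "(nat \<Rightarrow> nat) set \<Rightarrow> ((nat \<Rightarrow> nat) \<Rightarrow> real) \<Rightarrow> ((nat \<Rightarrow> nat) \<Rightarrow> real) \<Rightarrow> real" where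
  "rcov A u v = rexp A (\<lambda>Z. u Z * v Z) - rexp A u * rexp A v"

definition rvar :: "(nat \<Rightarrow> nat) set \<Rightarrow> ((nat \<Rightarrow> nat) \<Rightarrow> real) \<Rightarrow> real" where
  "rvar A u = rcov A u u"

definition rcov_vec :: "(nat \<Rightarrow> nat) set \<Rightarrow> ((nat \<Rightarrow> nat) \<Rightarrow> real) \<Rightarrow> (nat \<Rightarrow> (nat \<Rightarrow> nat) \<Rightarrow> real) \<Rightarrow> nat \<Rightarrow> real vec" where
  "rcov_vec A u w d = vec d (\<lambda>j. rcov A u (w j))"

definition rcov_mat :: "(nat \<Rightarrow> nat) set \<Rightarrow> (nat \<Rightarrow> (nat \<Rightarrow> nat) \<Rightarrow> real) \<Rightarrow> nat \<Rightarrow> real mat" where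
  "rcov_mat A w d = mat d d (\<lambda>(i, j). rcov A (w i) (w j))"

definition sq_mult_corr :: "(nat \<Rightarrow> nat) set \<Rightarrow> ((nat \<Rightarrow> nat) \<Rightarrow> real) \<Rightarrow> (nat \<Rightarrow> (nat \<Rightarrow> nat) \<Rightarrow> real) \<Rightarrow> nat \<Rightarrow> real" where
  "sq_mult_corr A u w d =
     (rcov_vec A u w d \<bullet> (the (mat_inverse (rcov_mat A w d)) *\<^sub>v rcov_vec A u w d)) / rvar A u"

text \<open>Residual of the linear projection of u on the random vector w (up to an additive
  constant, which does not affect covariances)\<close>
definition proj_coef :: "(nat \<Rightarrow> nat) set \<Rightarrow> ((nat \<Rightarrow> nat) \<Rightarrow> real) \<Rightarrow> (nat \<Rightarrow> (nat \<Rightarrow> nat) \<Rightarrow> real) \<Rightarrow> nat \<Rightarrow> real vec" where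
  "proj_coef A u w d = the (mat_inverse (rcov_mat A w d)) *\<^sub>v rcov_vec A u w d"

definition proj_resid :: "(nat \<Rightarrow> nat) set \<Rightarrow> ((nat \<Rightarrow> nat) \<Rightarrow> real) \<Rightarrow> (nat \<Rightarrow> (nat \<Rightarrow> nat) \<Rightarrow> real) \<Rightarrow> nat \<Rightarrow> (nat \<Rightarrow> nat) \<Rightarrow> real" where
  "proj_resid A u w d = (\<lambda>Z. u Z - (\<Sum>j<d. proj_coef A u w d $ j * w j Z))"

definition group_mean :: "nat \<Rightarrow> (nat \<Rightarrow> nat \<Rightarrow> real) \<Rightarrow> (nat \<Rightarrow> nat) \<Rightarrow> nat \<Rightarrow> real" where
  "group_mean n V Z q = (\<Sum>i\<in>{i\<in>{..<n}. Z i = q}. V i q) / real (card {i\<in>{..<n}. Z i = q})"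

definition fact_est :: "nat \<Rightarrow> nat \<Rightarrow> (nat \<Rightarrow> nat \<Rightarrow> real) \<Rightarrow> nat \<Rightarrow> (nat \<Rightarrow> nat \<Rightarrow> real) \<Rightarrow> nat \<Rightarrow> (nat \<Rightarrow> nat) \<Rightarrow> real" where
  "fact_est K Q g n V f Z = (1 / 2 ^ (K - 1)) * (\<Sum>q<Q. g f q * group_mean n V Z q)"

definition indiv_effect :: "nat \<Rightarrow> nat \<Rightarrow> (nat \<Rightarrow> nat \<Rightarrow> real) \<Rightarrow> (nat \<Rightarrow> nat \<Rightarrow> real) \<Rightarrow> nat \<Rightarrow> nat \<Rightarrow> real" where
  "indiv_effect K Q g Y i f = (1 / 2 ^ (K - 1)) * (\<Sum>q<Q. g f q * Y i q)"

end

theory Submission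
  imports Defs "Jordan_Normal_Form.Determinant" "HOL-Combinatorics.Permutations"
begin

(* Under additivity Y_i(q) = Y_i(0) + d_q, so each of the estimators hat tau_f and hat tau_{x,k}
   is, up to an additive constant, a linear statistic sum_i u_i phi(Z_i) with sum_q n_q phi(q) = 0.
   Exchangeability of the CRFE gives (sum_q n_q phi(q) psi(q)) * S_uv as the covariance of two
   such statistics, hence

     Var(hat tau_f) = kappa_ff S_11,   Cov(hat tau_f, hat tau_{x,k}) = kappa_fk S_1x,
     Cov(hat tau_{x,k}, hat tau_{x,k'}) = kappa_kk' S_xx,   kappa_fk = 4^(1-K) sum_q g_fq g_kq / n_q.

   For covariances of this Kronecker form, the projection coefficient of hat tau_f on hat tau_{x,k}
   is (kappa_fk / kappa_kk) beta with beta = S_xx^-1 S_x1, and on the stacked vector hat tau_x it is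
   e_f (x) beta.  So gamma^2_fk = kappa_fk^2 / (kappa_ff kappa_kk) * S^par_11 / S_11,
   R^2_f = S^par_11 / S_11 = gamma^2_ff, and the residual of hat tau_f is uncorrelated with all of
   hat tau_x.  By orthogonality of the contrasts kappa_ff does not depend on f,
   |kappa_fk| <= kappa_ff, and kappa_fk = 0 for f <> k in a balanced design. *)

lemma rexp_sum: "rexp A (\<lambda>Z. \<Sum>j\<in>J. h j Z) = (\<Sum>j\<in>J. rexp A (h j))"
  unfolding rexp_def by (simp add: sum.swap[of _ A J] sum_divide_distrib)

lemma rexp_cmult: "rexp A (\<lambda>Z. c * h Z) = c * rexp A h"
  unfolding rexp_def by (simp add: sum_distrib_left)

lemma rcov_commute: "rcov A u v = rcov A v u"
  unfolding rcov_def by (simp add: mult.commute)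

lemma rcov_cong:
  assumes "\<And>Z. Z \<in> A \<Longrightarrow> u Z = u' Z" and "\<And>Z. Z \<in> A \<Longrightarrow> v Z = v' Z"
  shows "rcov A u v = rcov A u' v'"
  using assms unfolding rcov_def rexp_def by (simp cong: sum.cong)

lemma rcov_add_const:
  assumes "finite A" and "A \<noteq> {}"
  shows "rcov A (\<lambda>Z. u Z + a) (\<lambda>Z. v Z + b) = rcov A u v"
proof -
  have const: "rexp A (\<lambda>Z. c) = c" for c
    using assms unfolding rexp_def by simp
  have add: "rexp A (\<lambda>Z. h Z + h' Z) = rexp A h + rexp A h'" for h h'
    unfolding rexp_def by (simp add: sum.distrib add_divide_distrib)
  have "rexp A (\<lambda>Z. (u Z + a) * (v Z + b))
      = rexp A (\<lambda>Z. u Z * v Z) + b * rexp A u + a * rexp A v + a * b"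
    by (simp add: algebra_simps add rexp_cmult const)
  then show ?thesis
    unfolding rcov_def by (simp add: add const algebra_simps)
qed

lemma rcov_proj_resid:
  "rcov A (proj_resid A u w d) v = rcov A u v - (\<Sum>j<d. proj_coef A u w d $ j * rcov A (w j) v)"
proof -
  let ?c = "\<lambda>j. proj_coef A u w d $ j"
  have diff: "rexp A (\<lambda>Z. h Z - h' Z) = rexp A h - rexp A h'" for h h'
    unfolding rexp_def by (simp add: sum_subtractf diff_divide_distrib)
  have "rexp A (\<lambda>Z. proj_resid A u w d Z * v Z)
      = rexp A (\<lambda>Z. u Z * v Z) - (\<Sum>j<d. ?c j * rexp A (\<lambda>Z. w j Z * v Z))"
    unfolding proj_resid_def
    by (simp add: left_diff_distrib sum_distrib_right mult.assoc diff rexp_sum rexp_cmult)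
  moreover have "rexp A (proj_resid A u w d) = rexp A u - (\<Sum>j<d. ?c j * rexp A (w j))"
    unfolding proj_resid_def by (simp add: diff rexp_sum rexp_cmult)
  ultimately show ?thesis
    unfolding rcov_def
    by (simp add: left_diff_distrib right_diff_distrib sum_subtractf sum_distrib_right mult.assoc)
qed

lemma fcov_commute: "fcov n u v = fcov n v u"
  unfolding fcov_def by (simp add: mult.commute)

lemma fcov_eq:
  "fcov n u v = ((\<Sum>i<n. u i * v i) - (\<Sum>i<n. u i) * (\<Sum>i<n. v i) / real n) / (real n - 1)"
proof -
  let ?a = "fmean n u" and ?b = "fmean n v"
  have "(\<Sum>i<n. (u i - ?a) * (v i - ?b))
      = (\<Sum>i<n. u i * v i) - ?b * (\<Sum>i<n. u i) - ?a * (\<Sum>i<n. v i) + real n * ?a * ?b"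
    by (simp add: algebra_simps sum.distrib sum_subtractf sum_distrib_left)
  also have "\<dots> = (\<Sum>i<n. u i * v i) - (\<Sum>i<n. u i) * (\<Sum>i<n. v i) / real n"
    by (cases "n = 0") (simp_all add: fmean_def field_simps)
  finally show ?thesis
    unfolding fcov_def by simp
qed

section \<open>Exchangeability of the completely randomized design\<close>

lemma finite_crfe_assignments: "finite (crfe_assignments n Q nq)"
proof (rule finite_subset)
  show "crfe_assignments n Q nq \<subseteq> {..<n} \<rightarrow>\<^sub>E {..<Q}"
    unfolding crfe_assignments_def by auto
qed (simp add: finite_PiE)

lemma crfe_assignments_nonempty:
  "(\<Sum>q<Q. nq q) = n \<Longrightarrow> crfe_assignments n Q nq \<noteq> {}"
proof (induction Q arbitrary: n)
  case 0
  then show ?case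
    unfolding crfe_assignments_def by (intro ex_in_conv[THEN iffD1] exI[of _ "\<lambda>_. undefined"]) auto
next
  case (Suc Q)
  define n' where "n' = (\<Sum>q<Q. nq q)"
  have n: "n = n' + nq Q"
    using Suc.prems by (simp add: n'_def)
  obtain Z' where Z': "Z' \<in> crfe_assignments n' Q nq"
    using Suc.IH[OF n'_def[symmetric]] by blast
  then have Z'_range: "Z' \<in> {..<n'} \<rightarrow>\<^sub>E {..<Q}"
    and Z'_card: "\<And>q. q < Q \<Longrightarrow> card {i\<in>{..<n'}. Z' i = q} = nq q"
    unfolding crfe_assignments_def by auto
  define Z where "Z i = (if i < n' then Z' i else if i < n then Q else undefined)" for i
  have "Z \<in> {..<n} \<rightarrow>\<^sub>E {..<Suc Q}"
    using Z'_range n unfolding Z_def by (auto simp: PiE_def Pi_def extensional_def)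
  moreover have "card {i\<in>{..<n}. Z i = q} = nq q" if q: "q < Suc Q" for q
  proof (cases "q < Q")
    case True
    then have "{i\<in>{..<n}. Z i = q} = {i\<in>{..<n'}. Z' i = q}"
      using n unfolding Z_def by auto
    then show ?thesis
      using Z'_card True by simp
  next
    case False
    then have "q = Q"
      using q by simp
    have "Z' i < Q" if "i < n'" for i
      using Z'_range that by auto
    then have "{i\<in>{..<n}. Z i = q} = {n'..<n}"
      using \<open>q = Q\<close> n unfolding Z_def by (auto simp: less_not_refl3)
    then show ?thesis
      using n \<open>q = Q\<close> by simp
  qed
  ultimately show ?case
    unfolding crfe_assignments_def by blast
qed

lemma comp_permutes_crfe_assignments:
  assumes p: "p permutes {..<n}" and Z: "Z \<in> crfe_assignments n Q nq"
  shows "Z \<circ> p \<in> crfe_assignments n Q nq"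
proof -
  have Z_range: "Z \<in> {..<n} \<rightarrow>\<^sub>E {..<Q}"
    and Z_card: "\<And>q. q < Q \<Longrightarrow> card {i\<in>{..<n}. Z i = q} = nq q"
    using Z unfolding crfe_assignments_def by auto
  have "Z \<circ> p \<in> {..<n} \<rightarrow>\<^sub>E {..<Q}"
    using Z_range permutes_in_image[OF p] permutes_not_in[OF p]
    by (auto simp: PiE_def Pi_def extensional_def)
  moreover have "card {i\<in>{..<n}. (Z \<circ> p) i = q} = nq q" if "q < Q" for q
  proof -
    have "p ` {i\<in>{..<n}. Z (p i) = q} = {i\<in>p ` {..<n}. Z i = q}"
      by auto
    also have "\<dots> = {i\<in>{..<n}. Z i = q}"
      by (simp add: permutes_image[OF p])
    finally have "p ` {i\<in>{..<n}. Z (p i) = q} = {i\<in>{..<n}. Z i = q}" .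
    moreover have "inj_on p {i\<in>{..<n}. Z (p i) = q}"
      using permutes_inj[OF p] by (rule inj_on_subset) simp
    ultimately show ?thesis
      using Z_card[OF that] card_image by fastforce
  qed
  ultimately show ?thesis
    unfolding crfe_assignments_def by blast
qed

lemma sum_crfe_assignments_comp_permutes:
  assumes p: "p permutes {..<n}"
  shows "(\<Sum>Z\<in>crfe_assignments n Q nq. h (Z \<circ> p)) = (\<Sum>Z\<in>crfe_assignments n Q nq. h Z)"
proof (rule sum.reindex_bij_betw)
  have "Z \<circ> p \<circ> inv_into UNIV p = Z" "Z \<circ> inv_into UNIV p \<circ> p = Z" for Z :: "nat \<Rightarrow> nat"
    using permutes_inv_o[OF p] by (simp_all add: comp_assoc)
  then show "bij_betw (\<lambda>Z. Z \<circ> p) (crfe_assignments n Q nq) (crfe_assignments n Q nq)"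
    using comp_permutes_crfe_assignments[OF p] comp_permutes_crfe_assignments[OF permutes_inv[OF p]]
    by (intro bij_betw_byWitness[where f' = "\<lambda>Z. Z \<circ> inv_into UNIV p"]) auto
qed

lemma sum_units_crfe_assignment:
  assumes "Z \<in> crfe_assignments n Q nq"
  shows "(\<Sum>i<n. \<phi> (Z i)) = (\<Sum>q<Q. real (nq q) * \<phi> q)"
proof -
  have "(\<Sum>i<n. \<phi> (Z i)) = (\<Sum>q<Q. \<Sum>i\<in>{i\<in>{..<n}. Z i = q}. \<phi> (Z i))"
    using assms unfolding crfe_assignments_def by (intro sum.group[symmetric]) auto
  also have "\<dots> = (\<Sum>q<Q. real (card {i\<in>{..<n}. Z i = q}) * \<phi> q)"
    by (intro sum.cong) auto
  finally show ?thesis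
    using assms unfolding crfe_assignments_def by simp
qed

lemma crfe_first_moment:
  assumes i: "i < n"
  shows "real n * (\<Sum>Z\<in>crfe_assignments n Q nq. \<phi> (Z i))
       = real (card (crfe_assignments n Q nq)) * (\<Sum>q<Q. real (nq q) * \<phi> q)"
proof -
  let ?A = "crfe_assignments n Q nq"
  have same: "(\<Sum>Z\<in>?A. \<phi> (Z j)) = (\<Sum>Z\<in>?A. \<phi> (Z i))" if "j < n" for j
    using sum_crfe_assignments_comp_permutes[OF permutes_swap_id[of i "{..<n}" j], of "\<lambda>Z. \<phi> (Z j)"]
      i that by simp
  have "(\<Sum>j<n. \<Sum>Z\<in>?A. \<phi> (Z j)) = (\<Sum>j<n. \<Sum>Z\<in>?A. \<phi> (Z i))"
    by (rule sum.cong[OF refl], rule same) simp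
  then have "real n * (\<Sum>Z\<in>?A. \<phi> (Z i)) = (\<Sum>j<n. \<Sum>Z\<in>?A. \<phi> (Z j))"
    by simp
  also have "\<dots> = (\<Sum>Z\<in>?A. \<Sum>j<n. \<phi> (Z j))"
    by (rule sum.swap)
  also have "\<dots> = real (card ?A) * (\<Sum>q<Q. real (nq q) * \<phi> q)"
    by (simp add: sum_units_crfe_assignment)
  finally show ?thesis .
qed

text \<open>For \<open>j \<noteq> i\<close>, swapping \<open>j\<close> with another \<open>j' \<noteq> i\<close> fixes \<open>i\<close>, so the cross moment
  does not depend on \<open>j\<close>; summing it over \<open>j \<noteq> i\<close> reduces it to first moments.\<close>
lemma crfe_cross_moment:
  assumes i: "i < n" and j: "j < n" and "i \<noteq> j"
  shows "real n * (real n - 1) * (\<Sum>Z\<in>crfe_assignments n Q nq. \<phi> (Z i) * \<psi> (Z j))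
       = real (card (crfe_assignments n Q nq)) *
         ((\<Sum>q<Q. real (nq q) * \<phi> q) * (\<Sum>q<Q. real (nq q) * \<psi> q)
          - (\<Sum>q<Q. real (nq q) * (\<phi> q * \<psi> q)))"
proof -
  let ?A = "crfe_assignments n Q nq"
  let ?T = "\<lambda>j. \<Sum>Z\<in>?A. \<phi> (Z i) * \<psi> (Z j)"
  have same: "?T j' = ?T j" if "j' \<in> {..<n} - {i}" for j'
    using sum_crfe_assignments_comp_permutes[OF permutes_swap_id[of j "{..<n}" j'],
        of "\<lambda>Z. \<phi> (Z i) * \<psi> (Z j')"] that j \<open>i \<noteq> j\<close>
    by (simp add: transpose_def)
  have "(\<Sum>j'\<in>{..<n} - {i}. ?T j') = (\<Sum>j'\<in>{..<n} - {i}. ?T j)"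
    by (rule sum.cong[OF refl], rule same)
  then have "(real n - 1) * ?T j = (\<Sum>j'\<in>{..<n} - {i}. ?T j')"
    using i by (simp add: of_nat_diff)
  also have "\<dots> = (\<Sum>j'<n. ?T j') - ?T i"
    using i by (simp add: sum_diff1)
  also have "(\<Sum>j'<n. ?T j') = (\<Sum>Z\<in>?A. \<phi> (Z i) * (\<Sum>j'<n. \<psi> (Z j')))"
    by (simp add: sum.swap[of _ _ ?A] sum_distrib_left)
  also have "\<dots> = (\<Sum>Z\<in>?A. \<phi> (Z i) * (\<Sum>q<Q. real (nq q) * \<psi> q))"
    by (intro sum.cong) (simp_all add: sum_units_crfe_assignment)
  finally have E: "(real n - 1) * ?T j
      = (\<Sum>q<Q. real (nq q) * \<psi> q) * (\<Sum>Z\<in>?A. \<phi> (Z i)) - ?T i"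
    by (simp add: sum_distrib_right mult.commute)
  have "real n * (real n - 1) * ?T j = real n * ((real n - 1) * ?T j)"
    by (simp only: mult.assoc)
  also have "\<dots> = (\<Sum>q<Q. real (nq q) * \<psi> q) * (real n * (\<Sum>Z\<in>?A. \<phi> (Z i)))
                 - real n * ?T i"
    unfolding E by (simp add: algebra_simps)
  also have "\<dots> = (\<Sum>q<Q. real (nq q) * \<psi> q) * (real (card ?A) * (\<Sum>q<Q. real (nq q) * \<phi> q))
                 - real (card ?A) * (\<Sum>q<Q. real (nq q) * (\<phi> q * \<psi> q))"
    using crfe_first_moment[OF i, where \<phi> = \<phi>] crfe_first_moment[OF i, where \<phi> = "\<lambda>q. \<phi> q * \<psi> q"]
    by simp
  finally show ?thesis
    by (simp add: algebra_simps)
qed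

lemma crfe_product_moment:
  assumes n: "n \<ge> 2" and nq: "(\<Sum>q<Q. nq q) = n" and i: "i < n" and j: "j < n"
    and \<phi>: "(\<Sum>q<Q. real (nq q) * \<phi> q) = 0" and \<psi>: "(\<Sum>q<Q. real (nq q) * \<psi> q) = 0"
  shows "rexp (crfe_assignments n Q nq) (\<lambda>Z. \<phi> (Z i) * \<psi> (Z j))
       = (\<Sum>q<Q. real (nq q) * (\<phi> q * \<psi> q)) * (real n * of_bool (i = j) - 1)
         / (real n * (real n - 1))"
proof -
  let ?A = "crfe_assignments n Q nq"
  let ?\<kappa> = "\<Sum>q<Q. real (nq q) * (\<phi> q * \<psi> q)"
  have "card ?A > 0"
    using crfe_assignments_nonempty[OF nq] finite_crfe_assignments by (simp add: card_gt_0_iff)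
  have "real n * (real n - 1) * (\<Sum>Z\<in>?A. \<phi> (Z i) * \<psi> (Z j))
      = real (card ?A) * (?\<kappa> * (real n * of_bool (i = j) - 1))"
  proof (cases "i = j")
    case True
    then show ?thesis
      using crfe_first_moment[OF i, where \<phi> = "\<lambda>q. \<phi> q * \<psi> q"] by (simp add: algebra_simps)
  next
    case False
    then show ?thesis
      using crfe_cross_moment[OF i j False, where \<phi> = \<phi> and \<psi> = \<psi>] \<phi> \<psi> by simp
  qed
  then show ?thesis
    using n \<open>card ?A > 0\<close> unfolding rexp_def by (simp add: field_simps)
qed

definition linear_statistic :: "nat \<Rightarrow> (nat \<Rightarrow> real) \<Rightarrow> (nat \<Rightarrow> real) \<Rightarrow> (nat \<Rightarrow> nat) \<Rightarrow> real" where
  "linear_statistic n u \<phi> Z = (\<Sum>i<n. u i * \<phi> (Z i))"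

lemma rexp_linear_statistic:
  assumes "(\<Sum>q<Q. real (nq q) * \<phi> q) = 0"
  shows "rexp (crfe_assignments n Q nq) (linear_statistic n u \<phi>) = 0"
proof -
  have "rexp (crfe_assignments n Q nq) (\<lambda>Z. \<phi> (Z i)) = 0" if "i < n" for i
    using crfe_first_moment[OF that, where \<phi> = \<phi> and Q = Q and nq = nq] assms that
    unfolding rexp_def by simp
  then show ?thesis
    unfolding linear_statistic_def rexp_sum rexp_cmult by simp
qed

lemma double_sum_of_bool_diag:
  fixes u v :: "nat \<Rightarrow> real"
  shows "(\<Sum>i<n. \<Sum>j<n. u i * v j * (real n * of_bool (i = j) - 1))
       = real n * (\<Sum>i<n. u i * v i) - (\<Sum>i<n. u i) * (\<Sum>i<n. v i)"
proof -
  have "(\<Sum>i<n. \<Sum>j<n. u i * v j * (real n * of_bool (i = j) - 1))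
      = (\<Sum>i<n. real n * (u i * v i) - u i * (\<Sum>j<n. v j))"
  proof (rule sum.cong[OF refl])
    fix i assume "i \<in> {..<n}"
    have "(\<Sum>j<n. u i * v j * (real n * of_bool (i = j) - 1))
        = (\<Sum>j<n. (if i = j then real n * (u i * v j) else 0) - u i * v j)"
      by (intro sum.cong) (auto simp: algebra_simps)
    then show "(\<Sum>j<n. u i * v j * (real n * of_bool (i = j) - 1))
        = real n * (u i * v i) - u i * (\<Sum>j<n. v j)"
      using \<open>i \<in> {..<n}\<close> by (simp add: sum_subtractf sum_distrib_left)
  qed
  also have "\<dots> = real n * (\<Sum>i<n. u i * v i) - (\<Sum>i<n. u i) * (\<Sum>i<n. v i)"
    by (simp add: sum_subtractf sum_distrib_left[symmetric] sum_distrib_right[symmetric])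
  finally show ?thesis .
qed

lemma rcov_linear_statistic:
  assumes n: "n \<ge> 2" and nq: "(\<Sum>q<Q. nq q) = n"
    and \<phi>: "(\<Sum>q<Q. real (nq q) * \<phi> q) = 0" and \<psi>: "(\<Sum>q<Q. real (nq q) * \<psi> q) = 0"
  shows "rcov (crfe_assignments n Q nq) (linear_statistic n u \<phi>) (linear_statistic n v \<psi>)
       = (\<Sum>q<Q. real (nq q) * (\<phi> q * \<psi> q)) * fcov n u v"
proof -
  let ?A = "crfe_assignments n Q nq"
  let ?\<kappa> = "\<Sum>q<Q. real (nq q) * (\<phi> q * \<psi> q)"
  have prod: "linear_statistic n u \<phi> Z * linear_statistic n v \<psi> Z
      = (\<Sum>i<n. \<Sum>j<n. (u i * v j) * (\<phi> (Z i) * \<psi> (Z j)))" for Z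
    unfolding linear_statistic_def sum_product by (simp add: mult_ac)
  have "rexp ?A (\<lambda>Z. linear_statistic n u \<phi> Z * linear_statistic n v \<psi> Z)
      = (\<Sum>i<n. \<Sum>j<n. (u i * v j) * rexp ?A (\<lambda>Z. \<phi> (Z i) * \<psi> (Z j)))"
    unfolding prod rexp_sum rexp_cmult ..
  also have "\<dots> = (\<Sum>i<n. \<Sum>j<n. (u i * v j)
      * (?\<kappa> * (real n * of_bool (i = j) - 1) / (real n * (real n - 1))))"
    by (intro sum.cong refl) (simp add: crfe_product_moment[OF n nq _ _ \<phi> \<psi>])
  also have "\<dots> = ?\<kappa> / (real n * (real n - 1))
      * (\<Sum>i<n. \<Sum>j<n. u i * v j * (real n * of_bool (i = j) - 1))"
    unfolding sum_distrib_left by (intro sum.cong refl) (simp_all add: mult_ac)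
  also have "(\<Sum>i<n. \<Sum>j<n. u i * v j * (real n * of_bool (i = j) - 1))
      = real n * (\<Sum>i<n. u i * v i) - (\<Sum>i<n. u i) * (\<Sum>i<n. v i)"
    by (rule double_sum_of_bool_diag)
  also have "?\<kappa> / (real n * (real n - 1)) * \<dots> = ?\<kappa> * fcov n u v"
    using n by (simp add: fcov_eq field_simps)
  finally show ?thesis
    unfolding rcov_def rexp_linear_statistic[OF \<phi>] by simp
qed

section \<open>Orthogonality of factorial contrasts\<close>

lemma sum_sign_vectors_prod:
  assumes "S \<subseteq> {..<K}"
  shows "(\<Sum>\<sigma>\<in>{..<K} \<rightarrow>\<^sub>E {-1, 1}. \<Prod>k\<in>S. \<sigma> k) = (if S = {} then 2 ^ K else (0::real))"
proof -
  have "(\<Sum>\<sigma>\<in>{..<K} \<rightarrow>\<^sub>E {-1, 1}. \<Prod>k\<in>S. \<sigma> k)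
      = (\<Sum>\<sigma>\<in>{..<K} \<rightarrow>\<^sub>E {-1, 1}. \<Prod>k<K. if k \<in> S then \<sigma> k else (1::real))"
    using assms by (simp add: prod.inter_restrict[symmetric] Int_absorb1)
  also have "\<dots> = (\<Prod>k<K. \<Sum>b\<in>{-1, 1}. if k \<in> S then b else 1)"
    by (rule prod_sum_PiE[symmetric]) auto
  also have "\<dots> = (\<Prod>k<K. if k \<in> S then 0 else 2)"
    by (intro prod.cong) auto
  also have "\<dots> = (if S = {} then 2 ^ K else 0)"
    using assms by (auto intro!: prod_zero)
  finally show ?thesis .
qed

lemma sum_subsets_sign_vectors_prod:
  assumes \<sigma>: "\<sigma> \<in> {..<K} \<rightarrow>\<^sub>E {-1, 1}" and \<sigma>': "\<sigma>' \<in> {..<K} \<rightarrow>\<^sub>E {-1, 1}"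
  shows "(\<Sum>S\<in>Pow {..<K}. \<Prod>k\<in>S. \<sigma> k * \<sigma>' k) = (if \<sigma> = \<sigma>' then 2 ^ K else (0::real))"
proof -
  have "(\<Sum>S\<in>Pow {..<K}. \<Prod>k\<in>S. \<sigma> k * \<sigma>' k) = (\<Prod>k<K. \<sigma> k * \<sigma>' k + (1::real))"
    by (simp add: prod_add)
  also have "\<dots> = (\<Prod>k<K. if \<sigma> k = \<sigma>' k then 2 else 0)"
  proof (intro prod.cong refl)
    fix k assume "k \<in> {..<K}"
    then have "\<sigma> k \<in> {-1, 1}" "\<sigma>' k \<in> {-1, 1}"
      using \<sigma> \<sigma>' by auto
    then show "\<sigma> k * \<sigma>' k + 1 = (if \<sigma> k = \<sigma>' k then 2 else 0)"
      by auto
  qed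
  also have "\<dots> = (if \<sigma> = \<sigma>' then 2 ^ K else 0)"
  proof (cases "\<sigma> = \<sigma>'")
    case False
    then obtain k where "k < K" "\<sigma> k \<noteq> \<sigma>' k"
      using \<sigma> \<sigma>' by (metis PiE_ext lessThan_iff)
    then show ?thesis
      using False by (auto intro!: prod_zero)
  qed simp
  finally show ?thesis .
qed

lemma prod_mult_prod_sign:
  assumes "finite A" "finite B" and sign: "\<And>k. k \<in> A \<inter> B \<Longrightarrow> \<sigma> k * \<sigma> k = (1::real)"
  shows "(\<Prod>k\<in>A. \<sigma> k) * (\<Prod>k\<in>B. \<sigma> k) = (\<Prod>k\<in>(A - B) \<union> (B - A). \<sigma> k)"
proof -
  have "(\<Prod>k\<in>A \<inter> B. \<sigma> k) * (\<Prod>k\<in>A \<inter> B. \<sigma> k) = 1"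
    using sign by (simp add: prod.distrib[symmetric])
  moreover have "(\<Prod>k\<in>(A - B) \<union> (B - A). \<sigma> k) = (\<Prod>k\<in>A - B. \<sigma> k) * (\<Prod>k\<in>B - A. \<sigma> k)"
    using assms by (intro prod.union_disjoint) auto
  ultimately show ?thesis
    using prod.Int_Diff[OF \<open>finite A\<close>, of \<sigma> B] prod.Int_Diff[OF \<open>finite B\<close>, of \<sigma> A]
    by (simp add: Int_commute algebra_simps)
qed

locale factorial_design =
  fixes K :: nat and iota :: "nat \<Rightarrow> nat \<Rightarrow> real" and eff :: "nat \<Rightarrow> nat set"
  assumes iota_bij: "bij_betw (\<lambda>q. restrict (iota q) {..<K}) {..<2 ^ K} ({..<K} \<rightarrow>\<^sub>E {-1, 1})"
    and eff_bij: "bij_betw eff {..<2 ^ K - 1} {S. S \<subseteq> {..<K} \<and> S \<noteq> {}}"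
begin

abbreviation contrast :: "nat \<Rightarrow> nat \<Rightarrow> real" where
  "contrast f q \<equiv> \<Prod>k\<in>eff f. iota q k"

lemma sign_vector_iota: "q < 2 ^ K \<Longrightarrow> restrict (iota q) {..<K} \<in> {..<K} \<rightarrow>\<^sub>E {-1, 1}"
  using bij_betwE[OF iota_bij] by blast

lemma iota_sign: "q < 2 ^ K \<Longrightarrow> k < K \<Longrightarrow> iota q k \<in> {-1, 1}"
  using sign_vector_iota by (metis PiE_mem lessThan_iff restrict_apply')

lemma iota_square: "q < 2 ^ K \<Longrightarrow> k < K \<Longrightarrow> iota q k * iota q k = 1"
  using iota_sign by fastforce

lemma eff_subset: "f < 2 ^ K - 1 \<Longrightarrow> eff f \<subseteq> {..<K}"
  using bij_betwE[OF eff_bij] by blast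

lemma contrast_restrict: "f < 2 ^ K - 1 \<Longrightarrow> contrast f q = (\<Prod>k\<in>eff f. restrict (iota q) {..<K} k)"
  using eff_subset by (intro prod.cong) auto

lemma contrast_square: "f < 2 ^ K - 1 \<Longrightarrow> q < 2 ^ K \<Longrightarrow> contrast f q * contrast f q = 1"
  using iota_square eff_subset by (auto simp: prod.distrib[symmetric] intro!: prod.neutral)

lemma contrast_orthogonal:
  assumes f: "f < 2 ^ K - 1" and k: "k < 2 ^ K - 1"
  shows "(\<Sum>q<2 ^ K. contrast f q * contrast k q) = (if f = k then 2 ^ K else 0)"
proof -
  let ?D = "(eff f - eff k) \<union> (eff k - eff f)"
  have D: "?D \<subseteq> {..<K}"
    using eff_subset[OF f] eff_subset[OF k] by blast
  have "(\<Sum>q<2 ^ K. contrast f q * contrast k q) = (\<Sum>q<2 ^ K. \<Prod>j\<in>?D. restrict (iota q) {..<K} j)"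
  proof (intro sum.cong refl)
    fix q :: nat assume "q \<in> {..<2 ^ K}"
    then have "contrast f q * contrast k q = (\<Prod>j\<in>?D. iota q j)"
      using eff_subset[OF f] eff_subset[OF k] iota_square
      by (intro prod_mult_prod_sign) (auto intro: finite_subset)
    also have "\<dots> = (\<Prod>j\<in>?D. restrict (iota q) {..<K} j)"
      by (intro prod.cong refl) (use D in auto)
    finally show "contrast f q * contrast k q = (\<Prod>j\<in>?D. restrict (iota q) {..<K} j)" .
  qed
  also have "\<dots> = (\<Sum>\<sigma>\<in>{..<K} \<rightarrow>\<^sub>E {-1, 1}. \<Prod>j\<in>?D. \<sigma> j)"
    by (rule sum.reindex_bij_betw[OF iota_bij])
  also have "\<dots> = (if f = k then 2 ^ K else 0)"
    using sum_sign_vectors_prod[OF D] bij_betw_imp_inj_on[OF eff_bij] f k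
    by (auto simp: inj_on_def)
  finally show ?thesis .
qed

lemma sum_contrast:
  assumes "f < 2 ^ K - 1"
  shows "(\<Sum>q<2 ^ K. contrast f q) = 0"
proof -
  have "(\<Sum>q<2 ^ K. contrast f q) = (\<Sum>\<sigma>\<in>{..<K} \<rightarrow>\<^sub>E {-1, 1}. \<Prod>j\<in>eff f. \<sigma> j)"
    unfolding contrast_restrict[OF assms] by (rule sum.reindex_bij_betw[OF iota_bij])
  also have "\<dots> = 0"
    using sum_sign_vectors_prod[OF eff_subset[OF assms]] bij_betwE[OF eff_bij] assms by auto
  finally show ?thesis .
qed

lemma contrast_complete:
  assumes q: "q < 2 ^ K" and q': "q' < 2 ^ K"
  shows "1 + (\<Sum>f<2 ^ K - 1. contrast f q * contrast f q') = (if q = q' then 2 ^ K else 0)"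
proof -
  let ?\<sigma> = "restrict (iota q) {..<K}" and ?\<sigma>' = "restrict (iota q') {..<K}"
  have "(\<Sum>f<2 ^ K - 1. contrast f q * contrast f q') = (\<Sum>f<2 ^ K - 1. \<Prod>j\<in>eff f. ?\<sigma> j * ?\<sigma>' j)"
    by (simp add: contrast_restrict prod.distrib)
  also have "\<dots> = (\<Sum>S\<in>{S. S \<subseteq> {..<K} \<and> S \<noteq> {}}. \<Prod>j\<in>S. ?\<sigma> j * ?\<sigma>' j)"
    by (rule sum.reindex_bij_betw[OF eff_bij])
  also have "1 + \<dots> = (\<Sum>S\<in>Pow {..<K}. \<Prod>j\<in>S. ?\<sigma> j * ?\<sigma>' j)"
  proof -
    have "Pow {..<K} = insert {} {S. S \<subseteq> {..<K} \<and> S \<noteq> {}}"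
      by auto
    then show ?thesis
      by (simp add: sum.insert)
  qed
  also have "\<dots> = (if ?\<sigma> = ?\<sigma>' then 2 ^ K else 0)"
    using q q' by (intro sum_subsets_sign_vectors_prod sign_vector_iota)
  also have "(?\<sigma> = ?\<sigma>') = (q = q')"
    using q q' bij_betw_imp_inj_on[OF iota_bij] by (auto simp: inj_on_def)
  finally show ?thesis .
qed

lemma orthogonal_contrasts_imp_constant:
  assumes orth: "\<And>f. f < 2 ^ K - 1 \<Longrightarrow> (\<Sum>q<2 ^ K. contrast f q * D q) = 0"
    and q: "q < 2 ^ K"
  shows "D q = D 0"
proof -
  have mean: "2 ^ K * D q' = (\<Sum>q<2 ^ K. D q)" if q': "q' < 2 ^ K" for q'
  proof -
    have "2 ^ K * D q' = (\<Sum>q<2 ^ K. D q * (if q = q' then 2 ^ K else 0))"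
      using q' by (simp add: if_distrib sum.delta' cong: if_cong)
    also have "\<dots> = (\<Sum>q<2 ^ K. D q * (1 + (\<Sum>f<2 ^ K - 1. contrast f q * contrast f q')))"
      using contrast_complete[OF _ q'] by (intro sum.cong refl) simp
    also have "\<dots> = (\<Sum>q<2 ^ K. D q)
        + (\<Sum>f<2 ^ K - 1. contrast f q' * (\<Sum>q<2 ^ K. contrast f q * D q))"
      by (simp add: algebra_simps sum.distrib sum_distrib_left sum.swap[of _ "{..<2 ^ K}"])
    finally show ?thesis
      by (simp add: orth)
  qed
  have "2 ^ K * D q = 2 ^ K * D 0"
    using mean[OF q] mean[of 0] by simp
  then show ?thesis
    by simp
qed

lemma abs_contrast: "f < 2 ^ K - 1 \<Longrightarrow> q < 2 ^ K \<Longrightarrow> \<bar>contrast f q\<bar> = 1"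
  using contrast_square by (simp add: abs_square_eq_1[symmetric] power2_eq_square)

definition contrast_gram :: "(nat \<Rightarrow> nat) \<Rightarrow> nat \<Rightarrow> nat \<Rightarrow> real" where
  "contrast_gram nq f k = (\<Sum>q<2 ^ K. contrast f q * contrast k q / real (nq q))"

lemma contrast_gram_diag:
  "f < 2 ^ K - 1 \<Longrightarrow> contrast_gram nq f f = (\<Sum>q<2 ^ K. 1 / real (nq q))"
  unfolding contrast_gram_def by (intro sum.cong refl) (simp add: contrast_square)

lemma abs_contrast_gram_le:
  assumes "f < 2 ^ K - 1" and "k < 2 ^ K - 1"
  shows "\<bar>contrast_gram nq f k\<bar> \<le> (\<Sum>q<2 ^ K. 1 / real (nq q))"
proof -
  have "\<bar>contrast_gram nq f k\<bar> \<le> (\<Sum>q<2 ^ K. \<bar>contrast f q * contrast k q / real (nq q)\<bar>)"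
    unfolding contrast_gram_def by (rule sum_abs)
  also have "\<dots> = (\<Sum>q<2 ^ K. 1 / real (nq q))"
    using assms by (intro sum.cong refl) (simp add: abs_mult abs_contrast)
  finally show ?thesis .
qed

lemma contrast_gram_sq_le:
  assumes "f < 2 ^ K - 1" and "k < 2 ^ K - 1"
  shows "(contrast_gram nq f k)\<^sup>2 \<le> contrast_gram nq f f * contrast_gram nq k k"
proof -
  have "\<bar>contrast_gram nq f k\<bar> \<le> \<bar>\<Sum>q<2 ^ K. 1 / real (nq q)\<bar>"
    using abs_contrast_gram_le[OF assms] by (simp add: sum_nonneg)
  then show ?thesis
    using contrast_gram_diag assms by (simp add: abs_le_square_iff power2_eq_square)
qed

lemma contrast_gram_balanced:
  assumes "\<And>q. q < 2 ^ K \<Longrightarrow> nq q * 2 ^ K = n" and "f < 2 ^ K - 1" "k < 2 ^ K - 1" "f \<noteq> k"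
  shows "contrast_gram nq f k = 0"
proof -
  have "nq q = n div 2 ^ K" if "q < 2 ^ K" for q
    using assms(1)[OF that] by (metis div_mult_self_is_m zero_less_numeral zero_less_power)
  then have "contrast_gram nq f k = (\<Sum>q<2 ^ K. contrast f q * contrast k q) / real (n div 2 ^ K)"
    unfolding contrast_gram_def sum_divide_distrib by simp
  then show ?thesis
    using contrast_orthogonal assms by simp
qed

text \<open>The quadratic form of the Gram matrix is \<open>\<Sum>\<^sub>q z\<^sub>q\<^sup>2 / n\<^sub>q\<close> with
  \<open>z\<^sub>q = \<Sum>\<^sub>k contrast k q * y\<^sub>k\<close>; its vanishing forces \<open>z = 0\<close>, and orthogonality
  of the contrasts recovers \<open>y\<close> from \<open>z\<close>.\<close>
lemma contrast_gram_nondegenerate: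
  assumes nq: "\<And>q. q < 2 ^ K \<Longrightarrow> nq q > 0"
    and y: "\<And>k. k < 2 ^ K - 1 \<Longrightarrow> (\<Sum>k'<2 ^ K - 1. contrast_gram nq k k' * y k') = 0"
    and k: "k < 2 ^ K - 1"
  shows "y k = 0"
proof -
  define z where "z q = (\<Sum>k<2 ^ K - 1. contrast k q * y k)" for q
  have gram_z: "(\<Sum>k'<2 ^ K - 1. contrast_gram nq k k' * y k')
      = (\<Sum>q<2 ^ K. contrast k q * z q / real (nq q))" for k
  proof -
    have "(\<Sum>k'<2 ^ K - 1. contrast_gram nq k k' * y k')
        = (\<Sum>k'<2 ^ K - 1. \<Sum>q<2 ^ K. contrast k q / real (nq q) * (contrast k' q * y k'))"
      unfolding contrast_gram_def sum_distrib_right by (simp add: mult_ac)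
    also have "\<dots> = (\<Sum>q<2 ^ K. contrast k q / real (nq q) * z q)"
      unfolding z_def sum_distrib_left by (rule sum.swap)
    finally show ?thesis
      by simp
  qed
  have "(\<Sum>q<2 ^ K. z q * z q / real (nq q))
      = (\<Sum>q<2 ^ K. (\<Sum>k<2 ^ K - 1. contrast k q * y k) * (z q / real (nq q)))"
    by (intro sum.cong refl, subst (1) z_def) simp
  also have "\<dots> = (\<Sum>q<2 ^ K. \<Sum>k<2 ^ K - 1. y k * (contrast k q * z q / real (nq q)))"
    by (simp add: sum_distrib_left sum_distrib_right sum_divide_distrib mult_ac)
  also have "\<dots> = (\<Sum>k<2 ^ K - 1. y k * (\<Sum>k'<2 ^ K - 1. contrast_gram nq k k' * y k'))"
    unfolding gram_z sum_distrib_left by (rule sum.swap)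
  also have "\<dots> = 0"
    using y by simp
  finally have z: "z q = 0" if "q < 2 ^ K" for q
    using nq that by (subst (asm) sum_nonneg_eq_0_iff) fastforce+
  have "2 ^ K * y k = (\<Sum>k'<2 ^ K - 1. y k' * (\<Sum>q<2 ^ K. contrast k q * contrast k' q))"
    using k by (simp add: contrast_orthogonal if_distrib sum.delta' cong: if_cong)
  also have "\<dots> = (\<Sum>q<2 ^ K. contrast k q * z q)"
    unfolding z_def sum_distrib_left sum_distrib_right
    by (subst sum.swap) (simp add: mult_ac)
  also have "\<dots> = 0"
    by (simp add: z)
  finally show ?thesis
    by simp
qed

end

lemma mult_mat_vec_index:
  "M \<in> carrier_mat d d' \<Longrightarrow> v \<in> carrier_vec d' \<Longrightarrow> i < d \<Longrightarrow> (M *\<^sub>v v) $ i = (\<Sum>j<d'. M $$ (i, j) * v $ j)"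
  by (simp add: scalar_prod_def atLeast0LessThan)

lemma scalar_prod_sum:
  "v \<in> carrier_vec d \<Longrightarrow> w \<in> carrier_vec d \<Longrightarrow> v \<bullet> w = (\<Sum>i<d. v $ i * w $ i)"
  by (simp add: scalar_prod_def atLeast0LessThan)

lemma fcov_xx_quadratic_form_nonneg:
  assumes w: "w \<in> carrier_vec L"
  shows "0 \<le> (fcov_xx n x L *\<^sub>v w) \<bullet> w"
proof -
  define e where "e i l = x i l - fmean n (\<lambda>i. x i l)" for i l
  have "(fcov_xx n x L *\<^sub>v w) \<bullet> w = (\<Sum>l<L. (fcov_xx n x L *\<^sub>v w) $ l * w $ l)"
    using w by (intro scalar_prod_sum mult_mat_vec_carrier[of _ L L]) (simp_all add: fcov_xx_def)
  also have "\<dots> = (\<Sum>l<L. (\<Sum>m<L. fcov n (\<lambda>i. x i l) (\<lambda>i. x i m) * w $ m) * w $ l)"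
    using w by (intro sum.cong refl) (simp add: fcov_xx_def scalar_prod_sum[of _ L])
  also have "\<dots> = (\<Sum>i<n. (\<Sum>l<L. e i l * w $ l) * (\<Sum>m<L. e i m * w $ m)) / (real n - 1)"
    unfolding fcov_def e_def[symmetric]
    by (simp add: sum_product sum_distrib_left sum_distrib_right sum_divide_distrib mult_ac
        sum.swap[of _ "{..<n}"])
  also have "\<dots> \<ge> 0"
    by (cases "n = 0") (auto intro!: divide_nonneg_nonneg sum_nonneg)
  finally show ?thesis .
qed

lemma invertible_mat_det_nonzero:
  fixes M :: "real mat"
  assumes M: "M \<in> carrier_mat d d" and "invertible_mat M"
  shows "det M \<noteq> 0"
proof -
  obtain B where MB: "M * B = 1\<^sub>m d" and BM: "B * M = 1\<^sub>m (dim_row B)"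
    using assms unfolding invertible_mat_def inverts_mat_def by auto
  then have "B \<in> carrier_mat d d"
    using M by (metis carrier_matD carrier_matI index_mult_mat(2,3) index_one_mat(2,3))
  then have "det M * det B = 1"
    using M MB by (metis det_mult det_one)
  then show ?thesis
    by auto
qed

lemma mat_inverse_det_nonzero:
  fixes M :: "real mat"
  assumes M: "M \<in> carrier_mat d d" and det: "det M \<noteq> 0"
  shows "the (mat_inverse M) \<in> carrier_mat d d"
    and "M * the (mat_inverse M) = 1\<^sub>m d" and "the (mat_inverse M) * M = 1\<^sub>m d"
proof -
  have "mat_inverse M \<noteq> None"
    using mat_inverse(1)[OF M, where b = "()"] det_non_zero_imp_unit[OF M det, where b = "()"]
    by blast
  then obtain B where "mat_inverse M = Some B"
    by blast
  then show "the (mat_inverse M) \<in> carrier_mat d d" "M * the (mat_inverse M) = 1\<^sub>m d"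
    "the (mat_inverse M) * M = 1\<^sub>m d"
    using mat_inverse(2)[OF M] by auto
qed

lemma mult_mat_vec_mat_inverse:
  fixes M :: "real mat"
  assumes M: "M \<in> carrier_mat d d" and "det M \<noteq> 0" and r: "r \<in> carrier_vec d"
  shows "M *\<^sub>v (the (mat_inverse M) *\<^sub>v r) = r"
  using mat_inverse_det_nonzero[OF assms(1,2)] M r by (simp flip: assoc_mult_mat_vec)

lemma mat_inverse_mult_vec:
  fixes M :: "real mat"
  assumes M: "M \<in> carrier_mat d d" and "det M \<noteq> 0" and v: "v \<in> carrier_vec d"
  shows "the (mat_inverse M) *\<^sub>v (M *\<^sub>v v) = v"
  using mat_inverse_det_nonzero[OF assms(1,2)] M v by (simp flip: assoc_mult_mat_vec)

lemma fproj_var_nonneg: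
  assumes "invertible_mat (fcov_xx n x L)"
  shows "0 \<le> fproj_var n u x L"
proof -
  have Sxx: "fcov_xx n x L \<in> carrier_mat L L" and S1x: "fcov_ux n u x L \<in> carrier_vec L"
    by (simp_all add: fcov_xx_def fcov_ux_def)
  note det = invertible_mat_det_nonzero[OF Sxx assms]
  let ?\<beta> = "the (mat_inverse (fcov_xx n x L)) *\<^sub>v fcov_ux n u x L"
  have "?\<beta> \<in> carrier_vec L"
    using mat_inverse_det_nonzero(1)[OF Sxx det] S1x by simp
  then show ?thesis
    unfolding fproj_var_def
    using fcov_xx_quadratic_form_nonneg mult_mat_vec_mat_inverse[OF Sxx det S1x] by metis
qed

lemma smult_mat_mult_vec:
  fixes M :: "real mat"
  assumes "M \<in> carrier_mat d d'" and "v \<in> carrier_vec d'"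
  shows "(a \<cdot>\<^sub>m M) *\<^sub>v v = a \<cdot>\<^sub>v (M *\<^sub>v v)"
  using assms by (intro eq_vecI) (auto simp: mult_mat_vec_index sum_distrib_left mult.assoc)

lemma sum_lessThan_mult_blocks:
  fixes h :: "nat \<Rightarrow> 'a::comm_monoid_add"
  shows "(\<Sum>j<F * L. h j) = (\<Sum>k<F. \<Sum>m<L. h (k * L + m))"
proof -
  have "(\<Sum>j<F * L. h j) = (\<Sum>k<F. \<Sum>j\<in>{k * L..<k * L + L}. h j)"
    using sum.nat_group[of h L F] by (simp add: mult.commute)
  also have "\<dots> = (\<Sum>k<F. \<Sum>m<L. h (k * L + m))"
  proof (rule sum.cong[OF refl])
    fix k
    have "(\<Sum>j\<in>{0 + k * L..<L + k * L}. h j) = (\<Sum>m\<in>{0..<L}. h (m + k * L))"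
      by (rule sum.shift_bounds_nat_ivl)
    then show "(\<Sum>j\<in>{k * L..<k * L + L}. h j) = (\<Sum>m<L. h (k * L + m))"
      by (simp add: atLeast0LessThan add.commute)
  qed
  finally show ?thesis .
qed

lemma div_mod_less_mult:
  fixes j F L :: nat
  assumes "j < F * L"
  shows "j div L < F" and "j mod L < L"
proof -
  show "j div L < F"
    using assms by (simp add: less_mult_imp_div_less)
  have "L > 0"
    using assms by (cases L) auto
  then show "j mod L < L"
    by simp
qed

section \<open>Covariances of Kronecker form\<close>

text \<open>In the application \<open>u f\<close> is the estimator of factorial effect \<open>f\<close> and \<open>w k l\<close> that
  of effect \<open>k\<close> on covariate \<open>l\<close>. Stacking the \<open>w k\<close> gives a random vector of dimension
  \<open>F * L\<close> whose covariance matrix is the Kronecker product of \<open>\<kappa>\<close> and \<open>Sww\<close>.\<close>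
locale kronecker_covariance =
  fixes A :: "(nat \<Rightarrow> nat) set"
    and u :: "nat \<Rightarrow> (nat \<Rightarrow> nat) \<Rightarrow> real"
    and w :: "nat \<Rightarrow> nat \<Rightarrow> (nat \<Rightarrow> nat) \<Rightarrow> real"
    and \<kappa> :: "nat \<Rightarrow> nat \<Rightarrow> real"
    and F L :: nat
    and Suu :: real and Suw :: "real vec" and Sww :: "real mat"
  assumes Sww_carrier: "Sww \<in> carrier_mat L L"
    and Sww_sym: "\<And>l m. l < L \<Longrightarrow> m < L \<Longrightarrow> Sww $$ (l, m) = Sww $$ (m, l)"
    and det_Sww: "det Sww \<noteq> 0"
    and Suw_carrier: "Suw \<in> carrier_vec L"
    and \<kappa>_sym: "\<And>f k. \<kappa> f k = \<kappa> k f"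
    and \<kappa>_diag_pos: "\<And>f. f < F \<Longrightarrow> \<kappa> f f > 0"
    and \<kappa>_nondegenerate:
      "\<And>y k. (\<And>k. k < F \<Longrightarrow> (\<Sum>k'<F. \<kappa> k k' * y k') = 0) \<Longrightarrow> k < F \<Longrightarrow> y k = 0"
    and rvar_u: "\<And>f. f < F \<Longrightarrow> rvar A (u f) = \<kappa> f f * Suu"
    and rcov_u_w: "\<And>f k l. f < F \<Longrightarrow> k < F \<Longrightarrow> l < L \<Longrightarrow> rcov A (u f) (w k l) = \<kappa> f k * Suw $ l"
    and rcov_w_w: "\<And>k k' l m. k < F \<Longrightarrow> k' < F \<Longrightarrow> l < L \<Longrightarrow> m < L \<Longrightarrow>
      rcov A (w k l) (w k' m) = \<kappa> k k' * Sww $$ (l, m)"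
begin

abbreviation \<beta> :: "real vec" where
  "\<beta> \<equiv> the (mat_inverse Sww) *\<^sub>v Suw"

lemma \<beta>_carrier: "\<beta> \<in> carrier_vec L"
  using mat_inverse_det_nonzero(1)[OF Sww_carrier det_Sww] Suw_carrier by simp

lemma Sww_mult_\<beta>: "Sww *\<^sub>v \<beta> = Suw"
  by (rule mult_mat_vec_mat_inverse[OF Sww_carrier det_Sww Suw_carrier])

lemma proj_coef_block:
  assumes f: "f < F" and k: "k < F"
  shows "proj_coef A (u f) (w k) L = (\<kappa> f k / \<kappa> k k) \<cdot>\<^sub>v \<beta>"
proof -
  let ?M = "\<kappa> k k \<cdot>\<^sub>m Sww"
  have M: "?M \<in> carrier_mat L L" and det: "det ?M \<noteq> 0"
    using Sww_carrier det_Sww \<kappa>_diag_pos[OF k] by auto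
  have "rcov_mat A (w k) L = ?M"
    using Sww_carrier by (intro eq_matI) (auto simp: rcov_mat_def rcov_w_w k)
  moreover have "rcov_vec A (u f) (w k) L = ?M *\<^sub>v ((\<kappa> f k / \<kappa> k k) \<cdot>\<^sub>v \<beta>)"
    using Sww_carrier Suw_carrier \<beta>_carrier \<kappa>_diag_pos[OF k]
    by (intro eq_vecI) (simp_all add: rcov_vec_def rcov_u_w f k smult_mat_mult_vec mult_mat_vec
        Sww_mult_\<beta>)
  ultimately show ?thesis
    unfolding proj_coef_def using mat_inverse_mult_vec[OF M det] \<beta>_carrier by simp
qed

lemma sq_mult_corr_block:
  assumes f: "f < F" and k: "k < F"
  shows "sq_mult_corr A (u f) (w k) L = (\<kappa> f k)\<^sup>2 / (\<kappa> f f * \<kappa> k k) * ((Suw \<bullet> \<beta>) / Suu)"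
proof -
  have "rcov_vec A (u f) (w k) L = \<kappa> f k \<cdot>\<^sub>v Suw"
    using Suw_carrier by (intro eq_vecI) (auto simp: rcov_vec_def rcov_u_w f k)
  then show ?thesis
    using proj_coef_block[OF f k] Suw_carrier \<beta>_carrier
    unfolding sq_mult_corr_def proj_coef_def[symmetric] rvar_u[OF f]
    by (simp add: power2_eq_square mult_ac)
qed

lemma sq_mult_corr_own_block: "f < F \<Longrightarrow> sq_mult_corr A (u f) (w f) L = (Suw \<bullet> \<beta>) / Suu"
  using sq_mult_corr_block[of f f] \<kappa>_diag_pos[of f] by (simp add: power2_eq_square)

lemma Max_sq_mult_corr_block:
  assumes f: "f < F" and \<kappa>_sq_le: "\<And>k. k < F \<Longrightarrow> (\<kappa> f k)\<^sup>2 \<le> \<kappa> f f * \<kappa> k k"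
    and nonneg: "0 \<le> (Suw \<bullet> \<beta>) / Suu"
  shows "Max ((\<lambda>k. sq_mult_corr A (u f) (w k) L) ` {..<F}) = sq_mult_corr A (u f) (w f) L"
proof (rule Max_eqI)
  fix r assume "r \<in> (\<lambda>k. sq_mult_corr A (u f) (w k) L) ` {..<F}"
  then obtain k where k: "k < F" and r: "r = sq_mult_corr A (u f) (w k) L"
    by blast
  have "(\<kappa> f k)\<^sup>2 / (\<kappa> f f * \<kappa> k k) \<le> 1"
    using \<kappa>_sq_le[OF k] \<kappa>_diag_pos[OF f] \<kappa>_diag_pos[OF k] by simp
  then show "r \<le> sq_mult_corr A (u f) (w f) L"
    unfolding r sq_mult_corr_block[OF f k] sq_mult_corr_own_block[OF f]
    using mult_right_mono[OF _ nonneg] by fastforce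
qed (use f in auto)

abbreviation stacked :: "nat \<Rightarrow> (nat \<Rightarrow> nat) \<Rightarrow> real" where
  "stacked j \<equiv> w (j div L) (j mod L)"

abbreviation block :: "nat \<Rightarrow> real vec" where
  "block f \<equiv> vec (F * L) (\<lambda>j. if j div L = f then \<beta> $ (j mod L) else 0)"

lemma rcov_mat_stacked_index:
  "i < F * L \<Longrightarrow> j < F * L \<Longrightarrow>
    rcov_mat A stacked (F * L) $$ (i, j) = \<kappa> (i div L) (j div L) * Sww $$ (i mod L, j mod L)"
  by (simp add: rcov_mat_def rcov_w_w div_mod_less_mult)

lemma block_index_less: "k < F \<Longrightarrow> m < L \<Longrightarrow> k * L + m < F * L"
proof -
  assume "k < F" "m < L"
  then have "k * L + m < Suc k * L" by simp
  also have "\<dots> \<le> F * L" using \<open>k < F\<close> by (intro mult_le_mono1) simp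
  finally show ?thesis .
qed

lemma Sww_kernel: "v \<in> carrier_vec L \<Longrightarrow> Sww *\<^sub>v v = 0\<^sub>v L \<Longrightarrow> v = 0\<^sub>v L"
  using det_0_iff_vec_prod_zero_field[OF Sww_carrier] det_Sww by blast

lemma rcov_mat_stacked_mult_vec_index:
  assumes v: "v \<in> carrier_vec (F * L)" and k: "k < F" and l: "l < L"
  shows "(rcov_mat A stacked (F * L) *\<^sub>v v) $ (k * L + l)
       = (\<Sum>k'<F. \<kappa> k k' * (Sww *\<^sub>v vec L (\<lambda>m. v $ (k' * L + m))) $ l)"
proof -
  let ?M = "rcov_mat A stacked (F * L)"
  have M: "?M \<in> carrier_mat (F * L) (F * L)"
    by (simp add: rcov_mat_def)
  have "(?M *\<^sub>v v) $ (k * L + l) = (\<Sum>k'<F. \<Sum>m<L. ?M $$ (k * L + l, k' * L + m) * v $ (k' * L + m))"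
    by (subst mult_mat_vec_index[OF M v block_index_less[OF k l]]) (rule sum_lessThan_mult_blocks)
  also have "\<dots> = (\<Sum>k'<F. \<kappa> k k' * (Sww *\<^sub>v vec L (\<lambda>m. v $ (k' * L + m))) $ l)"
  proof (intro sum.cong refl)
    fix k' assume "k' \<in> {..<F}"
    have "(Sww *\<^sub>v vec L (\<lambda>m. v $ (k' * L + m))) $ l = (\<Sum>m<L. Sww $$ (l, m) * v $ (k' * L + m))"
      using mult_mat_vec_index[OF Sww_carrier _ l, of "vec L (\<lambda>m. v $ (k' * L + m))"] by simp
    then show "(\<Sum>m<L. ?M $$ (k * L + l, k' * L + m) * v $ (k' * L + m))
        = \<kappa> k k' * (Sww *\<^sub>v vec L (\<lambda>m. v $ (k' * L + m))) $ l"
      using \<open>k' \<in> {..<F}\<close> block_index_less k l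
      by (simp add: rcov_mat_stacked_index sum_distrib_left mult.assoc)
  qed
  finally show ?thesis .
qed

text \<open>The Kronecker product of two nonsingular matrices is nonsingular: in block form
  \<open>M v = 0\<close> says \<open>\<Sum>\<^sub>k' \<kappa> k k' * Sww v\<^sub>k' = 0\<close>, so \<open>Sww v\<^sub>k' = 0\<close> and \<open>v\<^sub>k' = 0\<close>.\<close>
lemma det_rcov_mat_stacked: "det (rcov_mat A stacked (F * L)) \<noteq> 0"
proof -
  let ?M = "rcov_mat A stacked (F * L)"
  have M: "?M \<in> carrier_mat (F * L) (F * L)"
    by (simp add: rcov_mat_def)
  have "v = 0\<^sub>v (F * L)" if v: "v \<in> carrier_vec (F * L)" and Mv: "?M *\<^sub>v v = 0\<^sub>v (F * L)" for v
  proof -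
    define vb where "vb k' = vec L (\<lambda>m. v $ (k' * L + m))" for k'
    have "(\<Sum>k'<F. \<kappa> k k' * (Sww *\<^sub>v vb k') $ l) = 0" if "k < F" "l < L" for k l
      using rcov_mat_stacked_mult_vec_index[OF v that] Mv block_index_less[OF that]
      unfolding vb_def by simp
    then have "(Sww *\<^sub>v vb k') $ l = 0" if "k' < F" "l < L" for k' l
      using \<kappa>_nondegenerate[of "\<lambda>k'. (Sww *\<^sub>v vb k') $ l"] that by blast
    then have "Sww *\<^sub>v vb k' = 0\<^sub>v L" if "k' < F" for k'
      using Sww_carrier that by (intro eq_vecI) auto
    then have "vb k' = 0\<^sub>v L" if "k' < F" for k'
      using Sww_kernel that unfolding vb_def by simp
    then have "v $ j = 0" if "j < F * L" for j
      using div_mod_less_mult[OF that] div_mult_mod_eq[of j L]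
      by (metis vb_def index_vec index_zero_vec(1))
    then show ?thesis
      using v by (intro eq_vecI) auto
  qed
  then show ?thesis
    using det_0_iff_vec_prod_zero_field[OF M] by blast
qed

lemma sum_mult_block:
  assumes "f < F"
  shows "(\<Sum>j<F * L. h j * block f $ j) = (\<Sum>m<L. h (f * L + m) * \<beta> $ m)"
proof -
  have "(\<Sum>j<F * L. h j * block f $ j) = (\<Sum>k<F. \<Sum>m<L. h (k * L + m) * block f $ (k * L + m))"
    by (rule sum_lessThan_mult_blocks)
  also have "\<dots> = (\<Sum>k<F. if k = f then \<Sum>m<L. h (f * L + m) * \<beta> $ m else 0)"
    by (intro sum.cong refl) (auto simp: block_index_less)
  finally show ?thesis
    using assms by simp
qed

lemma proj_coef_stacked:
  assumes f: "f < F"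
  shows "proj_coef A (u f) stacked (F * L) = block f"
proof -
  let ?M = "rcov_mat A stacked (F * L)"
  have M: "?M \<in> carrier_mat (F * L) (F * L)"
    by (simp add: rcov_mat_def)
  have "(?M *\<^sub>v block f) $ i = rcov_vec A (u f) stacked (F * L) $ i" if i: "i < F * L" for i
  proof -
    note i' = div_mod_less_mult[OF i]
    have "(?M *\<^sub>v block f) $ i = (\<Sum>j<F * L. ?M $$ (i, j) * block f $ j)"
      by (rule mult_mat_vec_index[OF M _ i]) simp
    also have "\<dots> = (\<Sum>m<L. ?M $$ (i, f * L + m) * \<beta> $ m)"
      by (rule sum_mult_block[OF f])
    also have "\<dots> = \<kappa> (i div L) f * (Sww *\<^sub>v \<beta>) $ (i mod L)"
      using i i' f block_index_less mult_mat_vec_index[OF Sww_carrier \<beta>_carrier i'(2)]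
      by (simp add: rcov_mat_stacked_index sum_distrib_left mult.assoc)
    also have "\<dots> = rcov_vec A (u f) stacked (F * L) $ i"
      using i i' f by (simp add: Sww_mult_\<beta> rcov_vec_def rcov_u_w \<kappa>_sym)
    finally show ?thesis .
  qed
  then have "?M *\<^sub>v block f = rcov_vec A (u f) stacked (F * L)"
    by (intro eq_vecI) (simp_all add: rcov_vec_def rcov_mat_def)
  then show ?thesis
    unfolding proj_coef_def using mat_inverse_mult_vec[OF M det_rcov_mat_stacked, of "block f"] by simp
qed

lemma sq_mult_corr_stacked:
  assumes f: "f < F"
  shows "sq_mult_corr A (u f) stacked (F * L) = (Suw \<bullet> \<beta>) / Suu"
proof -
  have "rcov_vec A (u f) stacked (F * L) \<bullet> block f
      = (\<Sum>j<F * L. rcov_vec A (u f) stacked (F * L) $ j * block f $ j)"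
    by (rule scalar_prod_sum) (simp_all add: rcov_vec_def)
  also have "\<dots> = (\<Sum>m<L. rcov_vec A (u f) stacked (F * L) $ (f * L + m) * \<beta> $ m)"
    by (rule sum_mult_block[OF f])
  also have "\<dots> = \<kappa> f f * (Suw \<bullet> \<beta>)"
    using f Suw_carrier \<beta>_carrier block_index_less
    by (simp add: rcov_vec_def rcov_u_w scalar_prod_sum[of _ L] sum_distrib_left mult.assoc)
  finally show ?thesis
    unfolding sq_mult_corr_def proj_coef_def[symmetric] proj_coef_stacked[OF f] rvar_u[OF f]
    using \<kappa>_diag_pos[OF f] by simp
qed

lemma rcov_proj_resid_w:
  assumes f: "f < F" and k: "k < F" and l: "l < L"
  shows "rcov A (proj_resid A (u f) (w f) L) (w k l) = 0"
proof -
  have "proj_coef A (u f) (w f) L = \<beta>"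
    using proj_coef_block[OF f f] \<kappa>_diag_pos[OF f] by simp
  then have "rcov A (proj_resid A (u f) (w f) L) (w k l)
      = rcov A (u f) (w k l) - (\<Sum>j<L. \<beta> $ j * rcov A (w f j) (w k l))"
    by (simp add: rcov_proj_resid)
  also have "(\<Sum>j<L. \<beta> $ j * rcov A (w f j) (w k l)) = \<kappa> f k * (\<Sum>j<L. Sww $$ (l, j) * \<beta> $ j)"
    unfolding sum_distrib_left by (intro sum.cong refl) (simp add: rcov_w_w f k l Sww_sym)
  also have "(\<Sum>j<L. Sww $$ (l, j) * \<beta> $ j) = Suw $ l"
    using mult_mat_vec_index[OF Sww_carrier \<beta>_carrier l] by (simp add: Sww_mult_\<beta>)
  finally show ?thesis
    by (simp add: rcov_u_w f k l)
qed

lemma rcov_proj_resids: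
  assumes f: "f < F" and j: "j < F * L"
  shows "rcov A (proj_resid A (u f) (w f) L) (proj_resid A (stacked j) (w f) L) = 0"
proof -
  let ?r = "proj_resid A (u f) (w f) L"
  have zero: "rcov A (w k l) ?r = 0" if "k < F" "l < L" for k l
    using rcov_proj_resid_w[OF f that] by (simp add: rcov_commute)
  have "rcov A ?r (proj_resid A (stacked j) (w f) L)
      = rcov A (stacked j) ?r - (\<Sum>m<L. proj_coef A (stacked j) (w f) L $ m * rcov A (w f m) ?r)"
    by (subst rcov_commute) (rule rcov_proj_resid)
  also have "\<dots> = 0"
    using zero[OF div_mod_less_mult[OF j]] zero[OF f] by simp
  finally show ?thesis .
qed

end

section \<open>Factorial effect estimators under additivity\<close>

lemma fact_est_additive:
  assumes Z: "Z \<in> crfe_assignments n Q nq" and V: "\<And>i q. i < n \<Longrightarrow> q < Q \<Longrightarrow> V i q = u i + d q"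
  shows "fact_est K Q g n V f Z
       = linear_statistic n u (\<lambda>q. g f q / (2 ^ (K - 1) * real (nq q))) Z
         + (\<Sum>q<Q. real (nq q) * (g f q / (2 ^ (K - 1) * real (nq q)) * d q))"
proof -
  let ?\<phi> = "\<lambda>q. g f q / (2 ^ (K - 1) * real (nq q))"
  have Z_range: "\<And>i. i < n \<Longrightarrow> Z i < Q"
    and Z_card: "\<And>q. q < Q \<Longrightarrow> card {i\<in>{..<n}. Z i = q} = nq q"
    using Z unfolding crfe_assignments_def by auto
  have "fact_est K Q g n V f Z = (\<Sum>q<Q. \<Sum>i\<in>{i\<in>{..<n}. Z i = q}. V i (Z i) * ?\<phi> (Z i))"
    unfolding fact_est_def group_mean_def sum_distrib_left
  proof (intro sum.cong refl)
    fix q assume "q \<in> {..<Q}"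
    have "(\<Sum>i\<in>{i\<in>{..<n}. Z i = q}. V i (Z i) * ?\<phi> (Z i)) = (\<Sum>i\<in>{i\<in>{..<n}. Z i = q}. V i q * ?\<phi> q)"
      by (intro sum.cong) auto
    then show "1 / 2 ^ (K - 1) * (g f q * ((\<Sum>i\<in>{i\<in>{..<n}. Z i = q}. V i q) / real (card {i\<in>{..<n}. Z i = q})))
        = (\<Sum>i\<in>{i\<in>{..<n}. Z i = q}. V i (Z i) * ?\<phi> (Z i))"
      using Z_card \<open>q \<in> {..<Q}\<close>
      by (simp add: sum_distrib_left divide_inverse inverse_mult_distrib mult_ac)
  qed
  also have "\<dots> = (\<Sum>i<n. V i (Z i) * ?\<phi> (Z i))"
    using Z_range by (intro sum.group) auto
  also have "\<dots> = (\<Sum>i<n. u i * ?\<phi> (Z i) + ?\<phi> (Z i) * d (Z i))"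
    using Z_range V by (intro sum.cong refl) (simp add: algebra_simps add_divide_distrib)
  also have "\<dots> = linear_statistic n u ?\<phi> Z + (\<Sum>q<Q. real (nq q) * (?\<phi> q * d q))"
    unfolding linear_statistic_def sum.distrib
    using sum_units_crfe_assignment[OF Z, of "\<lambda>q. ?\<phi> q * d q"] by simp
  finally show ?thesis
    by (simp add: mult.assoc)
qed

text \<open>The general CRFE covariance formula, in which additivity makes all \<open>S\<^sub>q\<^sub>q\<close> equal
  and removes the \<open>S\<^sub>\<tau>\<^sub>\<tau>\<close> term.\<close>
lemma rcov_fact_est_additive:
  assumes n: "n \<ge> 2" and nq_sum: "(\<Sum>q<Q. nq q) = n" and nq_pos: "\<And>q. q < Q \<Longrightarrow> nq q \<ge> 1"
    and g_f: "(\<Sum>q<Q. g f q) = 0" and g_k: "(\<Sum>q<Q. g k q) = 0"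
    and V: "\<And>i q. i < n \<Longrightarrow> q < Q \<Longrightarrow> V i q = u i + d q"
    and V': "\<And>i q. i < n \<Longrightarrow> q < Q \<Longrightarrow> V' i q = v i + d' q"
  shows "rcov (crfe_assignments n Q nq) (fact_est K Q g n V f) (fact_est K Q g n V' k)
       = (\<Sum>q<Q. g f q * g k q / real (nq q)) / (2 ^ (K - 1))\<^sup>2 * fcov n u v"
proof -
  let ?A = "crfe_assignments n Q nq"
  let ?\<phi> = "\<lambda>h q. g h q / (2 ^ (K - 1) * real (nq q))"
  have centred: "(\<Sum>q<Q. real (nq q) * ?\<phi> h q) = 0" if "(\<Sum>q<Q. g h q) = 0" for h
  proof -
    have "(\<Sum>q<Q. real (nq q) * ?\<phi> h q) = (\<Sum>q<Q. g h q) / 2 ^ (K - 1)"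
      unfolding sum_divide_distrib using nq_pos by (intro sum.cong refl) (simp add: Suc_le_eq)
    then show ?thesis
      using that by simp
  qed
  have "rcov ?A (fact_est K Q g n V f) (fact_est K Q g n V' k)
      = rcov ?A (\<lambda>Z. linear_statistic n u (?\<phi> f) Z + (\<Sum>q<Q. real (nq q) * (?\<phi> f q * d q)))
                (\<lambda>Z. linear_statistic n v (?\<phi> k) Z + (\<Sum>q<Q. real (nq q) * (?\<phi> k q * d' q)))"
    by (intro rcov_cong fact_est_additive V V')
  also have "\<dots> = rcov ?A (linear_statistic n u (?\<phi> f)) (linear_statistic n v (?\<phi> k))"
    by (rule rcov_add_const[OF finite_crfe_assignments crfe_assignments_nonempty[OF nq_sum]])
  also have "\<dots> = (\<Sum>q<Q. real (nq q) * (?\<phi> f q * ?\<phi> k q)) * fcov n u v"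
    by (rule rcov_linear_statistic[OF n nq_sum centred[OF g_f] centred[OF g_k]])
  also have "(\<Sum>q<Q. real (nq q) * (?\<phi> f q * ?\<phi> k q)) = (\<Sum>q<Q. g f q * g k q / real (nq q)) / (2 ^ (K - 1))\<^sup>2"
    unfolding sum_divide_distrib
  proof (intro sum.cong refl)
    fix q assume "q \<in> {..<Q}"
    then have "real (nq q) \<noteq> 0"
      using nq_pos[of q] by simp
    then show "real (nq q) * (?\<phi> f q * ?\<phi> k q) = g f q * g k q / real (nq q) / (2 ^ (K - 1))\<^sup>2"
      by (simp add: field_simps power2_eq_square)
  qed
  finally show ?thesis .
qed

context factorial_design
begin

lemma additive_outcomes:
  assumes additive: "\<forall>i<n. \<forall>j<n. \<forall>f<2 ^ K - 1.
      indiv_effect K (2 ^ K) contrast Y i f = indiv_effect K (2 ^ K) contrast Y j f"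
    and i: "i < n" and q: "q < 2 ^ K"
  shows "Y i q = Y i 0 + (Y 0 q - Y 0 0)"
proof -
  have "(\<Sum>q<2 ^ K. contrast f q * (Y i q - Y 0 q)) = 0" if "f < 2 ^ K - 1" for f
  proof -
    have "indiv_effect K (2 ^ K) contrast Y i f = indiv_effect K (2 ^ K) contrast Y 0 f"
      using additive i that gr_zeroI[of n] by blast
    then show ?thesis
      unfolding indiv_effect_def by (simp add: right_diff_distrib sum_subtractf)
  qed
  then have "Y i q - Y 0 q = Y i 0 - Y 0 0"
    using orthogonal_contrasts_imp_constant[of "\<lambda>q. Y i q - Y 0 q"] q by blast
  then show ?thesis
    by simp
qed

lemma kronecker_covariance_crfe:
  assumes K: "K \<ge> 1" and nq_pos: "\<And>q. q < 2 ^ K \<Longrightarrow> nq q \<ge> 1" and nq_sum: "(\<Sum>q<2 ^ K. nq q) = n"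
    and Sxx: "invertible_mat (fcov_xx n x L)"
    and additive: "\<And>i q. i < n \<Longrightarrow> q < 2 ^ K \<Longrightarrow> Y i q = Y i 0 + d q"
  shows "kronecker_covariance (crfe_assignments n (2 ^ K) nq)
      (\<lambda>f. fact_est K (2 ^ K) contrast n Y f) (\<lambda>k l. fact_est K (2 ^ K) contrast n (\<lambda>i q. x i l) k)
      (\<lambda>f k. contrast_gram nq f k / (2 ^ (K - 1))\<^sup>2) (2 ^ K - 1) L
      (fcov n (\<lambda>i. Y i 0) (\<lambda>i. Y i 0)) (fcov_ux n (\<lambda>i. Y i 0) x L) (fcov_xx n x L)"
proof -
  have "(2::nat) \<le> 2 ^ K"
    using K by (cases K) auto
  also have "\<dots> = (\<Sum>q<(2::nat) ^ K. 1)"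
    by simp
  also have "\<dots> \<le> n"
    unfolding nq_sum[symmetric] using nq_pos by (intro sum_mono) auto
  finally have n: "n \<ge> 2" .
  have rcov_est: "rcov (crfe_assignments n (2 ^ K) nq)
        (fact_est K (2 ^ K) contrast n V f) (fact_est K (2 ^ K) contrast n V' k)
      = (\<Sum>q<2 ^ K. contrast f q * contrast k q / real (nq q)) / (2 ^ (K - 1))\<^sup>2 * fcov n u v"
    if "f < 2 ^ K - 1" "k < 2 ^ K - 1"
      and "\<And>i q. i < n \<Longrightarrow> q < 2 ^ K \<Longrightarrow> V i q = u i + d q"
      and "\<And>i q. i < n \<Longrightarrow> q < 2 ^ K \<Longrightarrow> V' i q = v i + d' q"
    for f k V V' u v d d'
    by (rule rcov_fact_est_additive[where g = contrast, OF n nq_sum _ sum_contrast[OF that(1)]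
          sum_contrast[OF that(2)] that(3,4)]) (rule nq_pos)
  have Sxx_carrier: "fcov_xx n x L \<in> carrier_mat L L"
    by (simp add: fcov_xx_def)
  show ?thesis
  proof unfold_locales
    show "det (fcov_xx n x L) \<noteq> 0"
      by (rule invertible_mat_det_nonzero[OF Sxx_carrier Sxx])
    show "0 < contrast_gram nq f f / (2 ^ (K - 1))\<^sup>2" if "f < 2 ^ K - 1" for f
    proof -
      have "0 < (\<Sum>q<2 ^ K. 1 / real (nq q))"
        using nq_pos by (intro sum_pos) (auto simp: Suc_le_eq lessThan_empty_iff)
      then show ?thesis
        by (simp add: contrast_gram_diag[OF that])
    qed
    show "y k = 0" if "\<And>k. k < 2 ^ K - 1 \<Longrightarrow>
        (\<Sum>k'<2 ^ K - 1. contrast_gram nq k k' / (2 ^ (K - 1))\<^sup>2 * y k') = 0" and "k < 2 ^ K - 1" for y k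
      using contrast_gram_nondegenerate[of nq y k] that nq_pos
      by (simp add: Suc_le_eq sum_divide_distrib[symmetric])
    have covariates: "\<And>i q. x i l = x i l + 0" for l
      by simp
    show "rvar (crfe_assignments n (2 ^ K) nq) (fact_est K (2 ^ K) contrast n Y f)
        = contrast_gram nq f f / (2 ^ (K - 1))\<^sup>2 * fcov n (\<lambda>i. Y i 0) (\<lambda>i. Y i 0)"
      if "f < 2 ^ K - 1" for f
      unfolding rvar_def contrast_gram_def by (rule rcov_est[OF that that additive additive])
    show "rcov (crfe_assignments n (2 ^ K) nq) (fact_est K (2 ^ K) contrast n Y f)
        (fact_est K (2 ^ K) contrast n (\<lambda>i q. x i l) k)
        = contrast_gram nq f k / (2 ^ (K - 1))\<^sup>2 * fcov_ux n (\<lambda>i. Y i 0) x L $ l"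
      if "f < 2 ^ K - 1" "k < 2 ^ K - 1" "l < L" for f k l
      unfolding contrast_gram_def fcov_ux_def
      using rcov_est[OF that(1,2) additive covariates] that(3) by simp
    show "rcov (crfe_assignments n (2 ^ K) nq) (fact_est K (2 ^ K) contrast n (\<lambda>i q. x i l) k)
        (fact_est K (2 ^ K) contrast n (\<lambda>i q. x i m) k')
        = contrast_gram nq k k' / (2 ^ (K - 1))\<^sup>2 * fcov_xx n x L $$ (l, m)"
      if "k < 2 ^ K - 1" "k' < 2 ^ K - 1" "l < L" "m < L" for k k' l m
      unfolding contrast_gram_def fcov_xx_def
      using rcov_est[OF that(1,2) covariates covariates] that(3,4) by simp
  qed (simp_all add: fcov_xx_def fcov_ux_def fcov_commute contrast_gram_def mult.commute)
qed

end

theorem proposition5: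
  fixes K L n F Q :: nat
    and iota :: "nat \<Rightarrow> nat \<Rightarrow> real"
    and eff :: "nat \<Rightarrow> nat set"
    and Y x :: "nat \<Rightarrow> nat \<Rightarrow> real"
    and nq :: "nat \<Rightarrow> nat"
    and g :: "nat \<Rightarrow> nat \<Rightarrow> real"
    and A :: "(nat \<Rightarrow> nat) set"
    and th :: "nat \<Rightarrow> (nat \<Rightarrow> nat) \<Rightarrow> real"
    and thx :: "nat \<Rightarrow> nat \<Rightarrow> (nat \<Rightarrow> nat) \<Rightarrow> real"
    and gam2 :: "nat \<Rightarrow> nat \<Rightarrow> real"
    and R2 :: "nat \<Rightarrow> real"
  defines "Q \<equiv> 2 ^ K"
    and "F \<equiv> 2 ^ K - 1"
    and "g \<equiv> (\<lambda>f q. \<Prod>k\<in>eff f. iota q k)"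
    and "A \<equiv> crfe_assignments n Q nq"
    and "th \<equiv> (\<lambda>f. fact_est K Q g n Y f)"
    and "thx \<equiv> (\<lambda>k l. fact_est K Q g n (\<lambda>i q. x i l) k)"
    and "gam2 \<equiv> (\<lambda>f k. sq_mult_corr A (th f) (thx k) L)"
    and "R2 \<equiv> (\<lambda>f. sq_mult_corr A (th f) (\<lambda>j. thx (j div L) (j mod L)) (F * L))"
  assumes K: "K \<ge> 1"
    and L: "L \<ge> 1"
    and iota: "bij_betw (\<lambda>q. restrict (iota q) {..<K}) {..<Q} ({..<K} \<rightarrow>\<^sub>E {-1, 1})"
    and eff: "bij_betw eff {..<F} {S. S \<subseteq> {..<K} \<and> S \<noteq> {}}"
    and nq_pos: "\<forall>q<Q. nq q \<ge> 1"
    and nq_sum: "(\<Sum>q<Q. nq q) = n"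
    and Sxx: "invertible_mat (fcov_xx n x L)"
    and additive: "\<forall>i<n. \<forall>j<n. \<forall>f<F. indiv_effect K Q g Y i f = indiv_effect K Q g Y j f"
    and S11_pos: "fcov n (\<lambda>i. Y i 0) (\<lambda>i. Y i 0) > 0"
  shows "(\<forall>f<F. Max (gam2 f ` {..<F}) = gam2 f f \<and> gam2 f f = R2 f
            \<and> R2 f = fproj_var n (\<lambda>i. Y i 0) x L / fcov n (\<lambda>i. Y i 0) (\<lambda>i. Y i 0))
       \<and> (\<forall>f<F. \<forall>j<F * L.
            rcov A (proj_resid A (th f) (thx f) L)
                   (proj_resid A (thx (j div L) (j mod L)) (thx f) L) = 0)
       \<and> ((\<forall>q<Q. nq q * Q = n) \<longrightarrow> (\<forall>f<F. \<forall>k<F. k \<noteq> f \<longrightarrow> gam2 f k = 0))"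
proof -
  interpret factorial_design K iota eff
    using iota eff unfolding assms(1,2) by unfold_locales
  define \<kappa> where "\<kappa> f k = contrast_gram nq f k / (2 ^ (K - 1))\<^sup>2" for f k
  have additive_Y: "Y i q = Y i 0 + (Y 0 q - Y 0 0)" if "i < n" "q < 2 ^ K" for i q
    using additive_outcomes[OF _ that] additive unfolding assms(1-3) by blast
  have nq_pos': "\<And>q. q < 2 ^ K \<Longrightarrow> 1 \<le> nq q"
    using nq_pos unfolding assms(1) by blast
  interpret kronecker_covariance A th thx \<kappa> F L "fcov n (\<lambda>i. Y i 0) (\<lambda>i. Y i 0)"
      "fcov_ux n (\<lambda>i. Y i 0) x L" "fcov_xx n x L"
    unfolding assms(1-6) \<kappa>_def
    by (rule kronecker_covariance_crfe[where d = "\<lambda>q. Y 0 q - Y 0 0",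
          OF K nq_pos' nq_sum[unfolded assms(1)] Sxx additive_Y])
  have \<kappa>_sq_le: "(\<kappa> f k)\<^sup>2 \<le> \<kappa> f f * \<kappa> k k" if "f < F" "k < F" for f k
    using contrast_gram_sq_le[OF that[unfolded assms(2)]]
    unfolding \<kappa>_def by (simp add: power_divide divide_right_mono)
  have \<kappa>_balanced: "\<kappa> f k = 0" if "\<forall>q<Q. nq q * Q = n" "f < F" "k < F" "k \<noteq> f" for f k
    using contrast_gram_balanced[of nq n f k] that unfolding assms(1,2) \<kappa>_def by auto
  have "0 \<le> fproj_var n (\<lambda>i. Y i 0) x L / fcov n (\<lambda>i. Y i 0) (\<lambda>i. Y i 0)"
    using fproj_var_nonneg[OF Sxx] S11_pos by simp
  then show ?thesis
    unfolding assms(7,8) fproj_var_def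
    using Max_sq_mult_corr_block[OF _ \<kappa>_sq_le] sq_mult_corr_own_block sq_mult_corr_stacked
      rcov_proj_resids sq_mult_corr_block \<kappa>_balanced by auto
qed

end
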